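(* Let $X$ be a finite connected poset of length $1$. If $|\mathrm{Min}(X)|>1$ and $|\mathrm{Max}(X)|>1$, then there are two disjoint maximal chains $C,D$ in $X$.
   Context: The length of $X$ is the maximum of $|C|-1$ over chains $C\subseteq X$. $\mathrm{Min}(X)$ and $\mathrm{Max}(X)$ are the sets of minimal and maximal elements of $X$. $X$ is connected if any two elements are joined by a sequence of elements with consecutive ones comparable. *)

theory Defs
  imports Main
begin

definition is_chain :: "'a::order set \<Rightarrow> 'a set \<Rightarrow> bool" where
  "is_chain X C \<longleftrightarrow> C \<subseteq> X \<and> (\<forall>x\<in>C. \<forall>y\<in>C. x \<le> y \<or> y \<le> x)"

definition maximal_chain :: "'a::order set \<Rightarrow> 'a set \<Rightarrow> bool" where
  "maximal_chain X C \<longleftrightarrow> is_chain X C \<and> (\<forall>D. is_chain X D \<and> C \<subseteq> D \<longrightarrow> D = C)"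

definition poset_length :: "'a::order set \<Rightarrow> nat" where
  "poset_length X = Max {card C - 1 | C. is_chain X C}"

definition Min_elems :: "'a::order set \<Rightarrow> 'a set" where
  "Min_elems X = {x \<in> X. \<not> (\<exists>y\<in>X. y < x)}"

definition Max_elems :: "'a::order set \<Rightarrow> 'a set" where
  "Max_elems X = {x \<in> X. \<not> (\<exists>y\<in>X. x < y)}"

definition comparable_rel :: "'a::order set \<Rightarrow> ('a \<times> 'a) set" where
  "comparable_rel X = {(x, y). x \<in> X \<and> y \<in> X \<and> (x \<le> y \<or> y \<le> x)}"

definition poset_connected :: "'a::order set \<Rightarrow> bool" where
  "poset_connected X \<longleftrightarrow> (\<forall>x\<in>X. \<forall>y\<in>X. (x, y) \<in> (comparable_rel X)\<^sup>*)"

end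

theory Submission
  imports Defs
begin

text \<open>In a poset of length at most 1 every chain has at most two elements, so every strict
pair a < b is already a maximal chain, and it suffices to find two disjoint strict pairs.
By connectedness two distinct minimal elements m1, m2 have strict upper neighbours; if these
differ we are done. Otherwise m1, m2 < a, and a maximal element c \<noteq> a has a strict lower
neighbour y. If y = m1, take m1 < c and m2 < a; if not, take m1 < a and y < c, where y \<noteq> a
because there are no chains of three elements.\<close>

lemma finite_chain_sizes:
  fixes X :: "'a::order set"
  assumes "finite X"
  shows "finite {card C - 1 | C. is_chain X C}"
proof -
  have "{card C - 1 | C. is_chain X C} \<subseteq> (\<lambda>C. card C - 1) ` Pow X"
    unfolding is_chain_def by auto
  then show ?thesis
    using assms finite_subset by blast
qed

lemma card_chain_le_Suc_poset_length:
  fixes X :: "'a::order set"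
  assumes "finite X" and "is_chain X C"
  shows "card C \<le> Suc (poset_length X)"
proof -
  have "card C - 1 \<le> poset_length X"
    unfolding poset_length_def using assms finite_chain_sizes by (intro Max_ge) auto
  then show ?thesis
    by simp
qed

lemma poset_length_le_1_no_strict_triple:
  fixes X :: "'a::order set"
  assumes "finite X" and "poset_length X \<le> 1"
    and "x \<in> X" "y \<in> X" "z \<in> X" and "x < y" "y < z"
  shows False
proof -
  have "is_chain X {x, y, z}"
    using assms unfolding is_chain_def by auto
  then have "card {x, y, z} \<le> 2"
    using card_chain_le_Suc_poset_length[OF assms(1)] assms(2) by fastforce
  moreover have "card {x, y, z} = 3"
    using assms(6,7) less_trans[OF assms(6,7)] by (auto dest: less_imp_neq)
  ultimately show False
    by simp
qed

lemma poset_length_le_1_strict_pair_maximal_chain: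
  fixes X :: "'a::order set"
  assumes "finite X" and "poset_length X \<le> 1"
    and "a \<in> X" "b \<in> X" and "a < b"
  shows "maximal_chain X {a, b}"
  unfolding maximal_chain_def
proof (intro conjI allI impI)
  show "is_chain X {a, b}"
    using assms unfolding is_chain_def by auto
  fix D
  assume D: "is_chain X D \<and> {a, b} \<subseteq> D"
  have "finite D"
    using D assms(1) finite_subset unfolding is_chain_def by blast
  moreover have "card D \<le> card {a, b}"
    using card_chain_le_Suc_poset_length[OF assms(1)] D assms(2,5) by fastforce
  ultimately show "D = {a, b}"
    using D by (metis card_seteq)
qed

lemma poset_connected_comparable_neighbour:
  fixes X :: "'a::order set"
  assumes "poset_connected X" and "x \<in> X" "w \<in> X" and "w \<noteq> x"
  obtains y where "y \<in> X" "y \<noteq> x" "x \<le> y \<or> y \<le> x"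
proof (rule ccontr)
  assume isolated: "\<not> thesis"
  have "(x, w) \<in> (comparable_rel X)\<^sup>*"
    using assms unfolding poset_connected_def by auto
  then have "w = x"
  proof (induction rule: rtrancl_induct)
    case base
    then show ?case by simp
  next
    case (step y z)
    then show ?case
      using isolated that unfolding comparable_rel_def by auto
  qed
  then show False
    using assms(4) by simp
qed

lemma poset_connected_Min_elems_upper_neighbour:
  fixes X :: "'a::order set"
  assumes "poset_connected X" and "m \<in> Min_elems X" and "w \<in> X" "w \<noteq> m"
  obtains a where "a \<in> X" "m < a"
  using assms poset_connected_comparable_neighbour[OF assms(1) _ assms(3,4)]
  unfolding Min_elems_def by (metis (no_types, lifting) mem_Collect_eq order_neq_le_trans)

lemma poset_connected_Max_elems_lower_neighbour:
  fixes X :: "'a::order set"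
  assumes "poset_connected X" and "c \<in> Max_elems X" and "w \<in> X" "w \<noteq> c"
  obtains y where "y \<in> X" "y < c"
  using assms poset_connected_comparable_neighbour[OF assms(1) _ assms(3,4)]
  unfolding Max_elems_def by (metis (no_types, lifting) mem_Collect_eq order_neq_le_trans)

lemma disjoint_strict_pairs:
  fixes X :: "'a::order set"
  assumes connected: "poset_connected X"
    and no_triple: "\<And>x y z. \<lbrakk>x \<in> X; y \<in> X; z \<in> X; x < y; y < z\<rbrakk> \<Longrightarrow> False"
    and mins: "m1 \<in> Min_elems X" "m2 \<in> Min_elems X" "m1 \<noteq> m2"
    and maxs: "M1 \<in> Max_elems X" "M2 \<in> Max_elems X" "M1 \<noteq> M2"
  obtains a b c d where "a \<in> X" "b \<in> X" "c \<in> X" "d \<in> X" "a < b" "c < d"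
    and "{a, b} \<inter> {c, d} = {}"
proof -
  have m_in_X: "m1 \<in> X" "m2 \<in> X" and m_minimal: "\<And>y. y \<in> X \<Longrightarrow> \<not> y < m1 \<and> \<not> y < m2"
    using mins unfolding Min_elems_def by auto
  obtain a where a: "a \<in> X" "m1 < a"
    using poset_connected_Min_elems_upper_neighbour[OF connected mins(1) m_in_X(2)] mins(3) by metis
  obtain b where b: "b \<in> X" "m2 < b"
    using poset_connected_Min_elems_upper_neighbour[OF connected mins(2) m_in_X(1)] mins(3) by metis
  show thesis
  proof (cases "a = b")
    case False
    then show thesis
      using that[OF m_in_X(1) a(1) m_in_X(2) b(1) a(2) b(2)] a b m_in_X m_minimal mins(3) by auto
  next
    case True
    obtain c where c: "c \<in> Max_elems X" "c \<noteq> a"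
      using maxs by metis
    then have c_in_X: "c \<in> X"
      unfolding Max_elems_def by simp
    obtain y where y: "y \<in> X" "y < c"
      using poset_connected_Max_elems_lower_neighbour[OF connected c(1) a(1)] c(2) by metis
    show thesis
    proof (cases "y = m1")
      case True
      then show thesis
        using that[OF m_in_X(1) c_in_X m_in_X(2) b(1) _ b(2)] y a \<open>a = b\<close> c(2) m_in_X m_minimal mins(3)
        by auto
    next
      case False
      have "y \<noteq> a"
        using no_triple[OF m_in_X(1) a(1) c_in_X a(2)] y by auto
      then show thesis
        using that[OF m_in_X(1) a(1) y(1) c_in_X a(2) y(2)] False c(2) a y m_minimal by auto
    qed
  qed
qed

theorem lemma4p5:
  fixes X :: "'a::order set"
  assumes "finite X"
    and "poset_connected X"
    and "poset_length X = 1"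
    and "card (Min_elems X) > 1"
    and "card (Max_elems X) > 1"
  shows "\<exists>C D. maximal_chain X C \<and> maximal_chain X D \<and> C \<inter> D = {}"
proof -
  have length_le_1: "poset_length X \<le> 1"
    using assms(3) by simp
  have two_elements: "\<exists>u v. u \<in> A \<and> v \<in> A \<and> u \<noteq> v" if "card A > 1" for A :: "'a set"
    using that card_le_Suc0_iff_eq[of A] card.infinite[of A] by fastforce
  obtain m1 m2 where "m1 \<in> Min_elems X" "m2 \<in> Min_elems X" "m1 \<noteq> m2"
    using two_elements[OF assms(4)] by blast
  moreover obtain M1 M2 where "M1 \<in> Max_elems X" "M2 \<in> Max_elems X" "M1 \<noteq> M2"
    using two_elements[OF assms(5)] by blast
  ultimately obtain a b c d where "a \<in> X" "b \<in> X" "c \<in> X" "d \<in> X" "a < b" "c < d"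
    and "{a, b} \<inter> {c, d} = {}"
    using disjoint_strict_pairs[OF assms(2)]
      poset_length_le_1_no_strict_triple[OF assms(1) length_le_1] by metis
  then show ?thesis
    using poset_length_le_1_strict_pair_maximal_chain[OF assms(1) length_le_1] by metis
qed

end
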